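(* For every integer $n\ge 1$, let \[V'_n=\{t_{3i+1}t_{3i+3}-t_{3i+2}t_{3n+1} : i=0,\dots,n-1\},\] \[V''_n=\{t_{3i+1}t_{3i+3}t_{3j+2}-t_{3j+1}t_{3j+3}t_{3i+2} : 0\le i<j\le n-1\}.\] Then $V_n=V'_n\cup V''_n$ is the universal Gröbner basis of the toric ideal $I_{P(2_n)}$.
   Context: Let $e_k\in\mathbb{R}^{2n+1}$ be standard basis vectors and let $M_n$ be the $(2n+1)\times(3n+1)$ matrix with columns $m_{3i+1}=e_{2i+1}+e_{2n+1}$, $m_{3i+2}=e_{2i+1}+e_{2i+2}+e_{2n+1}$, $m_{3i+3}=e_{2i+2}+e_{2n+1}$ for $i=0,\dots,n-1$, and $m_{3n+1}=e_{2n+1}$ (these are the nonzero codewords of the code $P(2_n)$). The toric ideal $I_{P(2_n)}$ is the kernel of $\mathbb{C}[t_1,\dots,t_{3n+1}]\to\mathbb{C}[x_1,\dots,x_{2n+1}]$, $t_k\mapsto x^{m_k}$. The universal Gröbner basis of an ideal is the union of its reduced Gröbner bases over all monomial orders. *)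

theory Defs
  imports Complex_Main "HOL-Library.Poly_Mapping"
begin

text \<open>Multivariate polynomials over the complex numbers: finitely supported maps from
  exponent vectors (monomials, nat \<Rightarrow> nat, variable t_k has index k) to coefficients.\<close>

type_synonym monom = "nat \<Rightarrow>\<^sub>0 nat"
type_synonym mpoly = "monom \<Rightarrow>\<^sub>0 complex"

definition var :: "nat \<Rightarrow> mpoly" where
  "var k = Poly_Mapping.single (Poly_Mapping.single k 1) 1"

definition monoms_in :: "nat set \<Rightarrow> monom set" where
  "monoms_in S = {m. Poly_Mapping.keys m \<subseteq> S}"

definition polys_in :: "nat set \<Rightarrow> mpoly set" where
  "polys_in S = {p. Poly_Mapping.keys p \<subseteq> monoms_in S}"

definition mdvd :: "monom \<Rightarrow> monom \<Rightarrow> bool" where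
  "mdvd m m' \<longleftrightarrow> (\<forall>k. Poly_Mapping.lookup m k \<le> Poly_Mapping.lookup m' k)"

definition monomial_order :: "nat set \<Rightarrow> (monom \<Rightarrow> monom \<Rightarrow> bool) \<Rightarrow> bool" where
  "monomial_order S ord \<longleftrightarrow>
     (\<forall>m\<in>monoms_in S. ord m m) \<and>
     (\<forall>m\<in>monoms_in S. \<forall>m'\<in>monoms_in S. ord m m' \<and> ord m' m \<longrightarrow> m = m') \<and>
     (\<forall>m1\<in>monoms_in S. \<forall>m2\<in>monoms_in S. \<forall>m3\<in>monoms_in S.
         ord m1 m2 \<and> ord m2 m3 \<longrightarrow> ord m1 m3) \<and>
     (\<forall>m\<in>monoms_in S. \<forall>m'\<in>monoms_in S. ord m m' \<or> ord m' m) \<and>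
     wf {(m, m'). m \<in> monoms_in S \<and> m' \<in> monoms_in S \<and> ord m m' \<and> m \<noteq> m'} \<and>
     (\<forall>m\<in>monoms_in S. \<forall>m'\<in>monoms_in S. \<forall>u\<in>monoms_in S. ord m m' \<longrightarrow> ord (m + u) (m' + u))"

text \<open>Leading monomial and leading coefficient (for nonzero p).\<close>
definition lm :: "(monom \<Rightarrow> monom \<Rightarrow> bool) \<Rightarrow> mpoly \<Rightarrow> monom" where
  "lm ord p = (THE m. m \<in> Poly_Mapping.keys p \<and> (\<forall>m'\<in>Poly_Mapping.keys p. ord m' m))"

definition lc :: "(monom \<Rightarrow> monom \<Rightarrow> bool) \<Rightarrow> mpoly \<Rightarrow> complex" where
  "lc ord p = Poly_Mapping.lookup p (lm ord p)"

definition groebner_basis :: "(monom \<Rightarrow> monom \<Rightarrow> bool) \<Rightarrow> mpoly set \<Rightarrow> mpoly set \<Rightarrow> bool" where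
  "groebner_basis ord I G \<longleftrightarrow> finite G \<and> G \<subseteq> I \<and>
     (\<forall>p\<in>I. p \<noteq> 0 \<longrightarrow> (\<exists>g\<in>G. g \<noteq> 0 \<and> mdvd (lm ord g) (lm ord p)))"

definition reduced_groebner_basis :: "(monom \<Rightarrow> monom \<Rightarrow> bool) \<Rightarrow> mpoly set \<Rightarrow> mpoly set \<Rightarrow> bool" where
  "reduced_groebner_basis ord I G \<longleftrightarrow> groebner_basis ord I G \<and> 0 \<notin> G \<and>
     (\<forall>g\<in>G. lc ord g = 1) \<and>
     (\<forall>g\<in>G. \<forall>g'\<in>G - {g}. \<forall>m\<in>Poly_Mapping.keys g. \<not> mdvd (lm ord g') m)"

definition universal_groebner_basis :: "nat set \<Rightarrow> mpoly set \<Rightarrow> mpoly set" where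
  "universal_groebner_basis S I =
     \<Union> {G. \<exists>ord. monomial_order S ord \<and> reduced_groebner_basis ord I G}"

text \<open>Toric ideal of the monomial map t_k |-> x^(A k) (A k :: nat \<Rightarrow> nat the exponent vector of
  column k) on the polynomial ring in the variables S: the kernel, i.e. the polynomials whose
  image has all coefficients zero.\<close>
definition image_exp :: "(nat \<Rightarrow> nat \<Rightarrow> nat) \<Rightarrow> monom \<Rightarrow> (nat \<Rightarrow> nat)" where
  "image_exp A m = (\<lambda>j. \<Sum>k\<in>Poly_Mapping.keys m. Poly_Mapping.lookup m k * A k j)"

definition toric_ideal :: "nat set \<Rightarrow> (nat \<Rightarrow> nat \<Rightarrow> nat) \<Rightarrow> mpoly set" where
  "toric_ideal S A = {p \<in> polys_in S.
      \<forall>e. (\<Sum>m\<in>{m \<in> Poly_Mapping.keys p. image_exp A m = e}. Poly_Mapping.lookup p m) = 0}"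

text \<open>The columns m_k (k = 1..3n+1) of M_n as 0/1 exponent vectors in x_1..x_{2n+1}.\<close>
definition P2_support :: "nat \<Rightarrow> nat \<Rightarrow> nat set" where
  "P2_support n k =
     (if k = 3*n + 1 then {2*n + 1}
      else (let i = (k - 1) div 3; r = (k - 1) mod 3 in
            if r = 0 then {2*i + 1, 2*n + 1}
            else if r = 1 then {2*i + 1, 2*i + 2, 2*n + 1}
            else {2*i + 2, 2*n + 1}))"

definition P2_matrix :: "nat \<Rightarrow> nat \<Rightarrow> nat \<Rightarrow> nat" where
  "P2_matrix n k j = (if j \<in> P2_support n k then 1 else 0)"

definition V'_set :: "nat \<Rightarrow> mpoly set" where
  "V'_set n = {var (3*i+1) * var (3*i+3) - var (3*i+2) * var (3*n+1) | i. i < n}"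

definition V''_set :: "nat \<Rightarrow> mpoly set" where
  "V''_set n = {var (3*i+1) * var (3*i+3) * var (3*j+2) - var (3*j+1) * var (3*j+3) * var (3*i+2)
                 | i j. i < j \<and> j \<le> n - 1}"

text \<open>Closure under sign: Groebner basis elements are determined up to a scalar (here a sign).\<close>
definition pm_closure :: "mpoly set \<Rightarrow> mpoly set" where
  "pm_closure G = G \<union> uminus ` G"

end

theory Submission
  imports Defs
begin

text \<open>Let \<Pi> be the set of ordered pairs (p, q) of monomials such that x^p - x^q or its
  negative lies in V. The combinatorial core is that \<Pi> separates the fibres of M_n: if distinct
  monomials P and Q have the same image, then p divides P and q divides Q for some (p, q) in \<Pi>.
  Indeed, if t_{3i+2} occurs more often in P than in Q, the coordinates 2i+1 and 2i+2 force
  t_{3i+1} t_{3i+3} to divide Q; then either t_{3n+1} divides P, or the coordinate 2n+1 forces some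
  t_{3j+2} to occur more often in Q than in P. For a given monomial order one may also take q < p,
  by cancelling a wrongly oriented pair and inducting along the order. So the leading monomial of a
  nonzero element f of the toric ideal is divisible by the leading monomial of an oriented
  binomial of \<Pi> whose other monomial divides a term of f; in a reduced Groebner basis this forces
  every element to be such a binomial. Conversely, for the lexicographic order with t_{3n+1}
  largest, the oriented binomials have leading monomials t_{3i+2} t_{3n+1} and
  t_{3i+1} t_{3i+3} t_{3j+2} (i < j), none of which divides a term of another one, so they form a
  reduced Groebner basis.\<close>

section \<open>Monomials and binomials\<close>

abbreviation keys :: "('a \<Rightarrow>\<^sub>0 'b::zero) \<Rightarrow> 'a set" where "keys \<equiv> Poly_Mapping.keys"
abbreviation lookup :: "('a \<Rightarrow>\<^sub>0 'b::zero) \<Rightarrow> 'a \<Rightarrow> 'b" where "lookup \<equiv> Poly_Mapping.lookup"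

abbreviation X :: "nat \<Rightarrow> monom" where "X k \<equiv> Poly_Mapping.single k 1"

lemma keys_add_monom: "keys (a + b :: monom) = keys a \<union> keys b"
  by (auto simp: in_keys_iff lookup_add)

lemma add_in_monoms_in: "a \<in> monoms_in S \<Longrightarrow> b \<in> monoms_in S \<Longrightarrow> a + b \<in> monoms_in S"
  by (simp add: monoms_in_def keys_add_monom)

lemma diff_in_monoms_in: "a \<in> monoms_in S \<Longrightarrow> a - b \<in> monoms_in S"
  unfolding monoms_in_def by (auto simp: in_keys_iff lookup_minus)

lemma zero_in_monoms_in: "0 \<in> monoms_in S"
  by (simp add: monoms_in_def)

lemma mdvd_trans: "mdvd a b \<Longrightarrow> mdvd b c \<Longrightarrow> mdvd a c"
  unfolding mdvd_def using order_trans by blast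

lemma diff_mdvd: "mdvd (a - b) a"
  by (simp add: mdvd_def lookup_minus)

lemma mdvd_diff_add: "mdvd a b \<Longrightarrow> b - a + a = b"
  by (rule poly_mapping_eqI) (simp add: mdvd_def lookup_add lookup_minus)

lemma mdvd_imp_keys_subset: "mdvd a b \<Longrightarrow> keys a \<subseteq> keys b"
  unfolding mdvd_def by (metis in_keys_iff le_zero_eq subsetI)

lemma mdvd_X2I:
  assumes "a \<noteq> b" "1 \<le> lookup P a" "1 \<le> lookup P b"
  shows "mdvd (X a + X b) P"
  using assms by (auto simp: mdvd_def lookup_add lookup_single when_def)

lemma mdvd_X3I:
  assumes "a \<noteq> b" "a \<noteq> c" "b \<noteq> c" "1 \<le> lookup P a" "1 \<le> lookup P b" "1 \<le> lookup P c"
  shows "mdvd (X a + X b + X c) P"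
  using assms by (auto simp: mdvd_def lookup_add lookup_single when_def)

definition binom :: "monom \<Rightarrow> monom \<Rightarrow> mpoly" where
  "binom p q = Poly_Mapping.single p 1 - Poly_Mapping.single q 1"

lemma lookup_binom:
  "p \<noteq> q \<Longrightarrow> lookup (binom p q) m = (if m = p then 1 else if m = q then -1 else 0)"
  by (simp add: binom_def lookup_minus lookup_single)

lemma keys_binom: "p \<noteq> q \<Longrightarrow> keys (binom p q) = {p, q}"
  by (auto simp: in_keys_iff lookup_binom split: if_splits)

lemma binom_neq_zero: "p \<noteq> q \<Longrightarrow> binom p q \<noteq> 0"
  using keys_binom by fastforce

lemma uminus_binom: "- binom p q = binom q p"
  by (simp add: binom_def)

section \<open>Monomial orders\<close>

locale monomial_ord =
  fixes S :: "nat set" and ord :: "monom \<Rightarrow> monom \<Rightarrow> bool"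
  assumes monomial_order: "monomial_order S ord"
begin

abbreviation M where "M \<equiv> monoms_in S"

lemma ord_refl: "m \<in> M \<Longrightarrow> ord m m"
  using monomial_order unfolding monomial_order_def by blast

lemma ord_antisym: "m \<in> M \<Longrightarrow> m' \<in> M \<Longrightarrow> ord m m' \<Longrightarrow> ord m' m \<Longrightarrow> m = m'"
  using monomial_order unfolding monomial_order_def by blast

lemma ord_trans:
  "m1 \<in> M \<Longrightarrow> m2 \<in> M \<Longrightarrow> m3 \<in> M \<Longrightarrow> ord m1 m2 \<Longrightarrow> ord m2 m3 \<Longrightarrow> ord m1 m3"
  using monomial_order unfolding monomial_order_def by blast

lemma ord_total: "m \<in> M \<Longrightarrow> m' \<in> M \<Longrightarrow> ord m m' \<or> ord m' m"
  using monomial_order unfolding monomial_order_def by blast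

lemma ord_add_right: "m \<in> M \<Longrightarrow> m' \<in> M \<Longrightarrow> u \<in> M \<Longrightarrow> ord m m' \<Longrightarrow> ord (m + u) (m' + u)"
  using monomial_order unfolding monomial_order_def by blast

lemma wf_ord_strict: "wf {(m, m'). m \<in> M \<and> m' \<in> M \<and> ord m m' \<and> m \<noteq> m'}"
  using monomial_order unfolding monomial_order_def by blast

text \<open>The monomial 1 is 0 here; if u < 0, then 0 > u > u + u > ... descends forever.\<close>
lemma ord_zero_least:
  assumes u: "u \<in> M" shows "ord 0 u"
proof (rule ccontr)
  assume not_ge: "\<not> ord 0 u"
  then have u_le: "ord u 0" using ord_total[OF u zero_in_monoms_in] by blast
  have "u \<noteq> 0" using not_ge ord_refl[OF zero_in_monoms_in] by auto
  define f where "f i = ((\<lambda>x. x + u) ^^ i) 0" for i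
  have fM: "f i \<in> M" for i
    by (induction i) (auto simp: f_def zero_in_monoms_in add_in_monoms_in u)
  have "(f (Suc i), f i) \<in> {(m, m'). m \<in> M \<and> m' \<in> M \<and> ord m m' \<and> m \<noteq> m'}" for i
  proof -
    have f_Suc: "f (Suc i) = u + f i" by (simp add: f_def add.commute)
    have "ord (u + f i) (0 + f i)" by (rule ord_add_right[OF u zero_in_monoms_in fM u_le])
    moreover have "f (Suc i) \<noteq> f i" using \<open>u \<noteq> 0\<close> f_Suc by simp
    ultimately show ?thesis using fM f_Suc add_in_monoms_in[OF u fM] by simp
  qed
  then show False using wf_ord_strict unfolding wf_iff_no_infinite_down_chain by blast
qed

lemma mdvd_imp_ord:
  assumes "a \<in> M" "b \<in> M" "mdvd a b" shows "ord a b"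
proof -
  have "ord (0 + a) ((b - a) + a)"
    using assms by (intro ord_add_right ord_zero_least diff_in_monoms_in zero_in_monoms_in)
  then show ?thesis using mdvd_diff_add[OF assms(3)] by simp
qed

lemma ord_add_cancel:
  assumes "a \<in> M" "b \<in> M" "w \<in> M" "ord (a + w) (b + w)" shows "ord a b"
proof (rule ccontr)
  assume "\<not> ord a b"
  then have "ord (b + w) (a + w)" using assms ord_total ord_add_right by blast
  then have "a + w = b + w" using assms ord_antisym add_in_monoms_in by blast
  then show False using \<open>\<not> ord a b\<close> ord_refl assms by simp
qed

lemma lm_eqI:
  assumes "keys p \<subseteq> M" "m \<in> keys p" "\<forall>m'\<in>keys p. ord m' m"
  shows "lm ord p = m"
  unfolding lm_def using assms ord_antisym by (intro the_equality) blast+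

lemma ord_max_exists:
  assumes "finite F" "F \<noteq> {}" "F \<subseteq> M"
  shows "\<exists>m\<in>F. \<forall>m'\<in>F. ord m' m"
  using assms
proof (induction rule: finite_ne_induct)
  case (singleton x)
  then show ?case using ord_refl by auto
next
  case (insert x F)
  then obtain m where m: "m \<in> F" "\<forall>m'\<in>F. ord m' m" by auto
  show ?case
  proof (cases "ord x m")
    case True
    then show ?thesis using m by auto
  next
    case False
    then have "ord m x" using ord_total insert m by blast
    then show ?thesis using m insert ord_trans ord_refl by (metis insert_iff insert_subset subsetD)
  qed
qed

lemma lm_greatest:
  assumes "p \<noteq> 0" "keys p \<subseteq> M"
  shows "lm ord p \<in> keys p" "\<forall>m'\<in>keys p. ord m' (lm ord p)"
  using ord_max_exists[of "keys p"] lm_eqI[OF assms(2)] assms by auto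

lemma lm_binom:
  assumes "p \<noteq> q" "p \<in> M" "q \<in> M" "ord q p"
  shows "lm ord (binom p q) = p"
  using assms keys_binom[OF assms(1)] ord_refl by (intro lm_eqI) auto

lemma lc_binom:
  assumes "p \<noteq> q" "p \<in> M" "q \<in> M" "ord q p"
  shows "lc ord (binom p q) = 1"
  using assms by (simp add: lc_def lm_binom lookup_binom)

lemma reduced_gb_lm_eq:
  assumes G: "reduced_groebner_basis ord I G" and I: "I \<subseteq> polys_in S"
    and g: "g \<in> G" and h: "h \<in> I" "h \<noteq> 0"
    and le: "ord (lm ord h) (lm ord g)" and m: "m \<in> keys g" "mdvd (lm ord h) m"
  shows "lm ord h = lm ord g"
proof -
  have keys_I: "keys f \<subseteq> M" if "f \<in> I" for f
    using that I by (auto simp: polys_in_def)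
  obtain g' where g': "g' \<in> G" "mdvd (lm ord g') (lm ord h)"
    using G h unfolding reduced_groebner_basis_def groebner_basis_def by blast
  have "g' = g"
    using G g g' m mdvd_trans unfolding reduced_groebner_basis_def by blast
  have "g \<noteq> 0" "g \<in> I"
    using G g unfolding reduced_groebner_basis_def groebner_basis_def by auto
  then have "lm ord g \<in> M" "lm ord h \<in> M"
    using lm_greatest(1) keys_I h by blast+
  moreover have "ord (lm ord g) (lm ord h)"
    using \<open>g' = g\<close> g'(2) calculation by (intro mdvd_imp_ord) auto
  ultimately show ?thesis
    using le ord_antisym by blast
qed

end

definition lex_ord :: "nat list \<Rightarrow> monom \<Rightarrow> monom \<Rightarrow> bool" where
  "lex_ord ks m m' \<longleftrightarrow>
     map (lookup m) ks = map (lookup m') ks \<or> (map (lookup m) ks, map (lookup m') ks) \<in> lexord less_than"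

lemma lexord_map_add:
  "(map f ks, map g ks) \<in> lexord less_than
    \<Longrightarrow> (map (\<lambda>k. f k + h k) ks, map (\<lambda>k. g k + h k) ks) \<in> lexord less_than"
  by (induction ks) auto

lemma lex_ord_monomial_order:
  assumes S: "S \<subseteq> set ks"
  shows "monomial_order S (lex_ord ks)"
  unfolding monomial_order_def
proof (intro conjI ballI impI allI)
  let ?key = "\<lambda>m. map (lookup m) ks"
  have key_inj: "m = m'" if "m \<in> monoms_in S" "m' \<in> monoms_in S" "?key m = ?key m'" for m m'
  proof (rule poly_mapping_eqI)
    fix k
    show "lookup m k = lookup m' k"
    proof (cases "k \<in> set ks")
      case True
      then show ?thesis using that(3) by (simp add: map_eq_conv)
    next
      case False
      then have "k \<notin> keys m" "k \<notin> keys m'" using that(1,2) S unfolding monoms_in_def by blast+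
      then show ?thesis by (simp add: in_keys_iff)
    qed
  qed
  show "lex_ord ks m m" for m by (simp add: lex_ord_def)
  show "m = m'" if "m \<in> monoms_in S" "m' \<in> monoms_in S" "lex_ord ks m m' \<and> lex_ord ks m' m" for m m'
    using that key_inj lexord_asymmetric[OF asym_less_than] unfolding lex_ord_def by blast
  show "lex_ord ks m1 m3" if "lex_ord ks m1 m2 \<and> lex_ord ks m2 m3" for m1 m2 m3
    using that lexord_trans[OF _ _ trans_less_than] unfolding lex_ord_def by metis
  have "\<forall>a b. (a, b) \<in> less_than \<or> a = b \<or> (b, a) \<in> less_than" by auto
  then show "lex_ord ks m m' \<or> lex_ord ks m' m" for m m'
    using lexord_linear unfolding lex_ord_def by blast
  show "lex_ord ks (m + u) (m' + u)" if "lex_ord ks m m'" for m m' u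
  proof -
    have lookup_plus: "lookup (a + u) = (\<lambda>k. lookup a k + lookup u k)" for a
      by (simp add: fun_eq_iff lookup_add)
    show ?thesis
      using that lexord_map_add[of "lookup m" ks "lookup m'" "lookup u"]
      unfolding lex_ord_def lookup_plus by (auto simp: map_eq_conv)
  qed
  show "wf {(m, m'). m \<in> monoms_in S \<and> m' \<in> monoms_in S \<and> lex_ord ks m m' \<and> m \<noteq> m'}"
  proof (rule wf_subset[OF wf_inv_image[OF wf_lex[OF wf_less_than], of ?key]])
    show "{(m, m'). m \<in> monoms_in S \<and> m' \<in> monoms_in S \<and> lex_ord ks m m' \<and> m \<noteq> m'}
      \<subseteq> inv_image (lex less_than) ?key"
      using key_inj by (auto simp: lex_ord_def lexord_lex)
  qed
qed

section \<open>Toric ideals\<close>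

lemma image_exp_eq_sum:
  assumes "finite K" "keys m \<subseteq> K"
  shows "image_exp A m j = (\<Sum>k\<in>K. lookup m k * A k j)"
  unfolding image_exp_def using assms
  by (intro sum.mono_neutral_left) (auto simp: in_keys_iff)

lemma image_exp_add: "image_exp A (m + m') j = image_exp A m j + image_exp A m' j"
proof -
  let ?K = "keys m \<union> keys m'"
  have "image_exp A (m + m') j = (\<Sum>k\<in>?K. lookup (m + m') k * A k j)"
    by (rule image_exp_eq_sum) (auto simp: keys_add_monom)
  also have "\<dots> = (\<Sum>k\<in>?K. lookup m k * A k j) + (\<Sum>k\<in>?K. lookup m' k * A k j)"
    by (simp add: lookup_add sum.distrib distrib_right)
  also have "\<dots> = image_exp A m j + image_exp A m' j"
    using image_exp_eq_sum[of ?K m A j] image_exp_eq_sum[of ?K m' A j] by simp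
  finally show ?thesis .
qed

lemma image_exp_add_cancel:
  "image_exp A (m + u) = image_exp A (m' + u') \<Longrightarrow> image_exp A u = image_exp A u'
    \<Longrightarrow> image_exp A m = image_exp A m'"
  by (auto simp: fun_eq_iff image_exp_add)

lemma image_exp_single: "image_exp A (Poly_Mapping.single k c) j = c * A k j"
  by (simp add: image_exp_def)

lemma toric_ideal_keys: "f \<in> toric_ideal S A \<Longrightarrow> keys f \<subseteq> monoms_in S"
  by (simp add: toric_ideal_def polys_in_def)

lemma toric_ideal_polys_in: "toric_ideal S A \<subseteq> polys_in S"
  by (auto simp: toric_ideal_def)

lemma toric_ideal_fibre_sum:
  assumes "f \<in> toric_ideal S A" "finite K" "keys f \<subseteq> K"
  shows "(\<Sum>m\<in>{m\<in>K. image_exp A m = e}. lookup f m) = 0"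
proof -
  have "(\<Sum>m\<in>{m\<in>K. image_exp A m = e}. lookup f m) = (\<Sum>m\<in>{m\<in>keys f. image_exp A m = e}. lookup f m)"
    using assms(2,3) by (intro sum.mono_neutral_right) (auto simp: in_keys_iff)
  also have "\<dots> = 0" using assms(1) by (simp add: toric_ideal_def)
  finally show ?thesis .
qed

lemma toric_ideal_diff:
  assumes f: "f \<in> toric_ideal S A" and g: "g \<in> toric_ideal S A"
  shows "f - g \<in> toric_ideal S A"
proof -
  let ?K = "keys f \<union> keys g"
  have keys_diff: "keys (f - g) \<subseteq> ?K"
    by (auto simp: in_keys_iff lookup_minus)
  then have "f - g \<in> polys_in S"
    using toric_ideal_keys[OF f] toric_ideal_keys[OF g] unfolding polys_in_def by blast
  moreover have "(\<Sum>m\<in>{m \<in> keys (f - g). image_exp A m = e}. lookup (f - g) m) = 0" for e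
  proof -
    have "(\<Sum>m\<in>{m \<in> keys (f - g). image_exp A m = e}. lookup (f - g) m)
        = (\<Sum>m\<in>{m \<in> ?K. image_exp A m = e}. lookup (f - g) m)"
      using keys_diff by (intro sum.mono_neutral_left) (auto simp flip: in_keys_iff)
    also have "\<dots> = 0"
      using toric_ideal_fibre_sum[OF f, of ?K] toric_ideal_fibre_sum[OF g, of ?K]
      by (simp add: lookup_minus sum_subtractf)
    finally show ?thesis .
  qed
  ultimately show ?thesis unfolding toric_ideal_def by blast
qed

lemma binom_in_toric_ideal:
  assumes "p \<noteq> q" "p \<in> monoms_in S" "q \<in> monoms_in S" "image_exp A p = image_exp A q"
  shows "binom p q \<in> toric_ideal S A"
proof -
  have "binom p q \<in> polys_in S"
    using assms by (simp add: polys_in_def keys_binom)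
  moreover have "(\<Sum>m\<in>{m \<in> keys (binom p q). image_exp A m = e}. lookup (binom p q) m) = 0" for e
  proof (cases "image_exp A p = e")
    case True
    then have "{m \<in> keys (binom p q). image_exp A m = e} = {p, q}"
      using assms by (auto simp: keys_binom)
    then show ?thesis using assms by (simp add: lookup_binom)
  next
    case False
    then have empty: "{m \<in> keys (binom p q). image_exp A m = e} = {}"
      using assms by (auto simp: keys_binom)
    show ?thesis unfolding empty by simp
  qed
  ultimately show ?thesis unfolding toric_ideal_def by blast
qed

text \<open>The coefficients of f sum to zero over each fibre, so no term of f is alone in its fibre.\<close>
lemma toric_ideal_key_partner:
  assumes f: "f \<in> toric_ideal S A" and m0: "m0 \<in> keys f"
  shows "\<exists>m\<in>keys f. m \<noteq> m0 \<and> image_exp A m = image_exp A m0"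
proof (rule ccontr)
  assume "\<not> ?thesis"
  then have fibre: "{m \<in> keys f. image_exp A m = image_exp A m0} = {m0}"
    using m0 by auto
  have "(\<Sum>m\<in>{m \<in> keys f. image_exp A m = image_exp A m0}. lookup f m) = 0"
    using f unfolding toric_ideal_def by blast
  then have "lookup f m0 = 0"
    unfolding fibre by simp
  then show False using m0 by (simp add: in_keys_iff)
qed

section \<open>Binomials separating the fibres of a toric ideal\<close>

locale toric_pair_system =
  fixes S :: "nat set" and A :: "nat \<Rightarrow> nat \<Rightarrow> nat" and \<Pi> :: "(monom \<times> monom) set"
  assumes pair_neq: "(p, q) \<in> \<Pi> \<Longrightarrow> p \<noteq> q"
    and pair_neq_zero: "(p, q) \<in> \<Pi> \<Longrightarrow> p \<noteq> 0"
    and pair_monoms_in: "(p, q) \<in> \<Pi> \<Longrightarrow> p \<in> monoms_in S \<and> q \<in> monoms_in S"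
    and pair_image_exp: "(p, q) \<in> \<Pi> \<Longrightarrow> image_exp A p = image_exp A q"
    and pair_divides:
      "\<lbrakk>P \<in> monoms_in S; Q \<in> monoms_in S; image_exp A P = image_exp A Q; P \<noteq> Q\<rbrakk>
        \<Longrightarrow> \<exists>(p, q)\<in>\<Pi>. mdvd p P \<and> mdvd q Q"
begin

abbreviation I where "I \<equiv> toric_ideal S A"

definition oriented_binoms :: "(monom \<Rightarrow> monom \<Rightarrow> bool) \<Rightarrow> mpoly set" where
  "oriented_binoms ord = {binom p q | p q. (p, q) \<in> \<Pi> \<and> ord q p}"

lemma binom_pair_in_ideal: "(p, q) \<in> \<Pi> \<Longrightarrow> binom p q \<in> I"
  using pair_neq pair_monoms_in pair_image_exp by (blast intro: binom_in_toric_ideal)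

text \<open>If the pair found for P > Q points the wrong way, cancelling it leaves P - p > Q - q with
  equal images, and P - p is smaller than P.\<close>
lemma oriented_pair_divides:
  assumes mo: "monomial_order S ord"
    and "P \<in> monoms_in S" "Q \<in> monoms_in S" "image_exp A P = image_exp A Q" "P \<noteq> Q" "ord Q P"
  shows "\<exists>(p, q)\<in>\<Pi>. mdvd p P \<and> mdvd q Q \<and> ord q p"
proof -
  interpret monomial_ord S ord by (rule monomial_ord.intro[OF mo])
  show ?thesis
    using assms(2-)
  proof (induction P arbitrary: Q rule: wf_induct_rule[OF wf_ord_strict])
    case (1 P)
    obtain p q where pq: "(p, q) \<in> \<Pi>" "mdvd p P" "mdvd q Q"
      using pair_divides[OF "1.prems"(1-4)] by blast
    have p: "p \<in> M" "p \<noteq> 0" and q: "q \<in> M" and pq_neq: "p \<noteq> q"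
      using pair_monoms_in pair_neq_zero pair_neq pq(1) by blast+
    show ?case
    proof (cases "ord q p")
      case True
      then show ?thesis using pq by blast
    next
      case False
      then have "ord p q" using ord_total p q by blast
      define P' Q' where "P' = P - p" and "Q' = Q - q"
      have P': "P' \<in> M" "P = P' + p" and Q': "Q' \<in> M" "Q = Q' + q"
        using "1.prems"(1,2) mdvd_diff_add pq(2,3) unfolding P'_def Q'_def
        by (auto intro: diff_in_monoms_in)
      have "ord (Q' + p) Q"
        using ord_add_right[OF p(1) q Q'(1) \<open>ord p q\<close>] Q'(2) by (simp add: add.commute)
      then have "ord (Q' + p) (P' + p)"
        using ord_trans "1.prems"(1,2,5) Q'(1) p(1) P'(2) add_in_monoms_in by metis
      then have less: "ord Q' P'"
        using ord_add_cancel Q'(1) P'(1) p(1) by blast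
      have "Q' \<noteq> P'"
      proof
        assume "Q' = P'"
        then have "ord P Q" using \<open>ord (Q' + p) Q\<close> P'(2) by simp
        then show False using ord_antisym "1.prems" by blast
      qed
      moreover have "image_exp A P' = image_exp A Q'"
        using "1.prems"(3) P'(2) Q'(2) pair_image_exp[OF pq(1)] image_exp_add_cancel by metis
      moreover have "(P', P) \<in> {(m, m'). m \<in> M \<and> m' \<in> M \<and> ord m m' \<and> m \<noteq> m'}"
        using P' p "1.prems"(1) mdvd_imp_ord diff_mdvd unfolding P'_def by auto
      ultimately obtain p' q' where "(p', q') \<in> \<Pi>" "mdvd p' P'" "mdvd q' Q'" "ord q' p'"
        using "1.IH" P'(1) Q'(1) less by blast
      then show ?thesis
        using mdvd_trans diff_mdvd unfolding P'_def Q'_def by blast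
    qed
  qed
qed

lemma lm_divisible_by_oriented_pair:
  assumes mo: "monomial_order S ord" and f: "f \<in> I" "f \<noteq> 0"
  shows "\<exists>(p, q)\<in>\<Pi>. mdvd p (lm ord f) \<and> ord q p \<and> (\<exists>m\<in>keys f. mdvd q m)"
proof -
  interpret monomial_ord S ord by (rule monomial_ord.intro[OF mo])
  have keys_f: "keys f \<subseteq> M" using toric_ideal_keys[OF f(1)] .
  note lm_f = lm_greatest[OF f(2) keys_f]
  obtain m where m: "m \<in> keys f" "m \<noteq> lm ord f" "image_exp A m = image_exp A (lm ord f)"
    using toric_ideal_key_partner[OF f(1) lm_f(1)] by blast
  show ?thesis
    using oriented_pair_divides[OF mo, of "lm ord f" m] m lm_f keys_f by fastforce
qed

text \<open>The oriented binomial x^p - x^q found below the leading monomial of g must be g itself: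
  reducedness first forces p = lm g, and then g - (x^p - x^q) would have a leading monomial
  dividing a term of g.\<close>
lemma reduced_gb_element_is_pair_binom:
  assumes mo: "monomial_order S ord" and G: "reduced_groebner_basis ord I G" and g: "g \<in> G"
  shows "\<exists>(p, q)\<in>\<Pi>. g = binom p q"
proof -
  interpret monomial_ord S ord by (rule monomial_ord.intro[OF mo])
  have g_I: "g \<in> I" and g_nz: "g \<noteq> 0" and lc_g: "lc ord g = 1"
    using G g unfolding reduced_groebner_basis_def groebner_basis_def by blast+
  have keys_g: "keys g \<subseteq> M" using toric_ideal_keys[OF g_I] .
  note lm_g = lm_greatest[OF g_nz keys_g]
  note lm_eq = reduced_gb_lm_eq[OF G toric_ideal_polys_in g]
  obtain p q m where pq: "(p, q) \<in> \<Pi>" "mdvd p (lm ord g)" "ord q p" and m: "m \<in> keys g" "mdvd q m"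
    using lm_divisible_by_oriented_pair[OF mo g_I g_nz] by blast
  have p: "p \<in> M" and q: "q \<in> M" and pq_neq: "p \<noteq> q"
    using pair_monoms_in pair_neq pq(1) by blast+
  define b where "b = binom p q"
  have b: "b \<in> I" "b \<noteq> 0" "lm ord b = p"
    unfolding b_def using binom_pair_in_ideal pq binom_neq_zero lm_binom p q pq_neq by auto
  have "p = lm ord g"
    using lm_eq[OF b(1,2)] b(3) pq(2) mdvd_imp_ord p lm_g keys_g
    by (metis mdvd_def order_refl subsetD)
  have "g - b = 0"
  proof (rule ccontr)
    assume h_nz: "g - b \<noteq> 0"
    have h_I: "g - b \<in> I" using toric_ideal_diff[OF g_I b(1)] .
    note lm_h = lm_greatest[OF h_nz toric_ideal_keys[OF h_I]]
    have "lookup (g - b) p = 0"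
      using lc_g \<open>p = lm ord g\<close> pq_neq by (simp add: b_def lc_def lookup_minus lookup_binom)
    then have "lm ord (g - b) \<noteq> p" using lm_h(1) by (auto simp: in_keys_iff)
    moreover have "lm ord (g - b) \<in> keys g \<or> lm ord (g - b) = q"
      using lm_h(1) \<open>lm ord (g - b) \<noteq> p\<close> pq_neq
      by (auto simp: b_def in_keys_iff lookup_minus lookup_binom split: if_splits)
    then have "ord (lm ord (g - b)) (lm ord g) \<and> (\<exists>m\<in>keys g. mdvd (lm ord (g - b)) m)"
      using lm_g \<open>p = lm ord g\<close> pq(3) m by (auto simp: mdvd_def)
    ultimately show False
      using lm_eq[OF h_I h_nz] \<open>p = lm ord g\<close> by blast
  qed
  then show ?thesis using pq(1) unfolding b_def by auto
qed

lemma universal_gb_subset_pair_binoms: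
  "universal_groebner_basis S I \<subseteq> (\<lambda>(p, q). binom p q) ` \<Pi>"
  unfolding universal_groebner_basis_def
  using reduced_gb_element_is_pair_binom by fastforce

lemma oriented_binoms_reduced_gb:
  assumes mo: "monomial_order S ord" and fin: "finite \<Pi>"
    and heads: "\<And>p q p' q' m. \<lbrakk>(p, q) \<in> \<Pi>; ord q p; (p', q') \<in> \<Pi>; ord q' p'; m \<in> {p, q}; mdvd p' m\<rbrakk>
        \<Longrightarrow> (p', q') = (p, q)"
  shows "reduced_groebner_basis ord I (oriented_binoms ord)"
proof -
  interpret monomial_ord S ord by (rule monomial_ord.intro[OF mo])
  have oriented: "\<exists>p q. g = binom p q \<and> (p, q) \<in> \<Pi> \<and> ord q p \<and> binom p q \<noteq> 0
      \<and> lm ord (binom p q) = p \<and> lc ord (binom p q) = 1 \<and> keys (binom p q) = {p, q}"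
    if "g \<in> oriented_binoms ord" for g
    using that pair_neq pair_monoms_in lm_binom lc_binom binom_neq_zero keys_binom
    unfolding oriented_binoms_def by blast
  have "finite (oriented_binoms ord)"
    unfolding oriented_binoms_def
    by (rule finite_subset[OF _ finite_imageI[OF fin, of "\<lambda>(p, q). binom p q"]]) auto
  moreover have "oriented_binoms ord \<subseteq> I"
    unfolding oriented_binoms_def using binom_pair_in_ideal by blast
  moreover have "\<exists>g\<in>oriented_binoms ord. g \<noteq> 0 \<and> mdvd (lm ord g) (lm ord f)"
    if f: "f \<in> I" "f \<noteq> 0" for f
  proof -
    obtain p q where "(p, q) \<in> \<Pi>" "ord q p" "mdvd p (lm ord f)"
      using lm_divisible_by_oriented_pair[OF mo f] by blast
    then show ?thesis
      using pair_neq pair_monoms_in lm_binom binom_neq_zero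
      unfolding oriented_binoms_def by fastforce
  qed
  moreover have "0 \<notin> oriented_binoms ord" "\<forall>g\<in>oriented_binoms ord. lc ord g = 1"
    using oriented by fastforce+
  moreover have "\<not> mdvd (lm ord g') m"
    if g: "g \<in> oriented_binoms ord" and g': "g' \<in> oriented_binoms ord - {g}" and m: "m \<in> keys g"
    for g g' m
  proof
    assume dvd: "mdvd (lm ord g') m"
    obtain p q where pq: "g = binom p q" "(p, q) \<in> \<Pi>" "ord q p" "keys (binom p q) = {p, q}"
      using oriented[OF g] by blast
    obtain p' q' where pq': "g' = binom p' q'" "(p', q') \<in> \<Pi>" "ord q' p'"
        "lm ord (binom p' q') = p'"
      using oriented g' by blast
    have "(p', q') = (p, q)"
      by (rule heads[OF pq(2,3) pq'(2,3)]) (use m dvd pq pq' in auto)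
    then show False using g' pq(1) pq'(1) by simp
  qed
  ultimately show ?thesis
    unfolding reduced_groebner_basis_def groebner_basis_def by blast
qed

lemma pm_closure_universal_gb_eq:
  assumes sym: "\<And>p q. (p, q) \<in> \<Pi> \<Longrightarrow> (q, p) \<in> \<Pi>"
    and mo: "monomial_order S ord" and red: "reduced_groebner_basis ord I (oriented_binoms ord)"
  shows "pm_closure (universal_groebner_basis S I) = (\<lambda>(p, q). binom p q) ` \<Pi>"
proof
  show "pm_closure (universal_groebner_basis S I) \<subseteq> (\<lambda>(p, q). binom p q) ` \<Pi>"
  proof
    fix x assume "x \<in> pm_closure (universal_groebner_basis S I)"
    then obtain g where "g \<in> universal_groebner_basis S I" "x = g \<or> x = - g"
      unfolding pm_closure_def by blast
    moreover obtain p q where "(p, q) \<in> \<Pi>" "g = binom p q"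
      using universal_gb_subset_pair_binoms calculation(1) by auto
    ultimately show "x \<in> (\<lambda>(p, q). binom p q) ` \<Pi>"
      using sym by (force simp: uminus_binom)
  qed
next
  interpret monomial_ord S ord by (rule monomial_ord.intro[OF mo])
  have sub: "oriented_binoms ord \<subseteq> universal_groebner_basis S I"
    unfolding universal_groebner_basis_def using mo red by blast
  show "(\<lambda>(p, q). binom p q) ` \<Pi> \<subseteq> pm_closure (universal_groebner_basis S I)"
  proof clarify
    fix p q assume "(p, q) \<in> \<Pi>"
    then have "binom p q \<in> oriented_binoms ord \<or> - binom p q \<in> oriented_binoms ord"
      using sym ord_total pair_monoms_in unfolding oriented_binoms_def uminus_binom by blast
    then show "binom p q \<in> pm_closure (universal_groebner_basis S I)"
      using sub unfolding pm_closure_def by (metis UnI1 UnI2 image_eqI minus_minus subsetD)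
  qed
qed

end

section \<open>The code P(2_n)\<close>

text \<open>Block i of M_n consists of the columns ia i, ib i, ic i; the last column, the variable
  t_{3n+1}, is ia n.\<close>
definition ia :: "nat \<Rightarrow> nat" where "ia i = 3 * i + 1"
definition ib :: "nat \<Rightarrow> nat" where "ib i = 3 * i + 2"
definition ic :: "nat \<Rightarrow> nat" where "ic i = 3 * i + 3"

lemma P2_index_simps [simp]:
  "ia i = ia j \<longleftrightarrow> i = j" "ib i = ib j \<longleftrightarrow> i = j" "ic i = ic j \<longleftrightarrow> i = j"
  "ia i \<noteq> ib j" "ib j \<noteq> ia i" "ia i \<noteq> ic j" "ic j \<noteq> ia i" "ib i \<noteq> ic j" "ic j \<noteq> ib i"
  unfolding ia_def ib_def ic_def by presburger+

lemma P2_index_range_iff: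
  "k \<in> {1..3*n+1} \<longleftrightarrow> k = ia n \<or> (\<exists>i<n. k = ia i \<or> k = ib i \<or> k = ic i)"
proof
  assume k: "k \<in> {1..3*n+1}"
  show "k = ia n \<or> (\<exists>i<n. k = ia i \<or> k = ib i \<or> k = ic i)"
  proof (cases "k = 3*n+1")
    case True
    then show ?thesis by (simp add: ia_def)
  next
    case False
    define i where "i = (k - 1) div 3"
    have "i < n" "k = ia i \<or> k = ib i \<or> k = ic i"
      using k False unfolding i_def ia_def ib_def ic_def by auto
    then show ?thesis by blast
  qed
qed (auto simp: ia_def ib_def ic_def)

lemma P2_support_simps:
  "i < n \<Longrightarrow> P2_support n (ia i) = {2*i+1, 2*n+1}"
  "i < n \<Longrightarrow> P2_support n (ib i) = {2*i+1, 2*i+2, 2*n+1}"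
  "i < n \<Longrightarrow> P2_support n (ic i) = {2*i+2, 2*n+1}"
  "P2_support n (ia n) = {2*n+1}"
  unfolding P2_support_def ia_def ib_def ic_def Let_def by auto presburger+

lemma image_exp_P2:
  assumes "P \<in> monoms_in {1..3*n+1}"
  shows "image_exp (P2_matrix n) P j = (\<Sum>k\<in>{k\<in>{1..3*n+1}. j \<in> P2_support n k}. lookup P k)"
proof -
  have "image_exp (P2_matrix n) P j = (\<Sum>k\<in>{1..3*n+1}. lookup P k * P2_matrix n k j)"
    using assms unfolding monoms_in_def by (intro image_exp_eq_sum) auto
  also have "\<dots> = (\<Sum>k\<in>{1..3*n+1}. if j \<in> P2_support n k then lookup P k else 0)"
    by (intro sum.cong) (auto simp: P2_matrix_def)
  finally show ?thesis by (simp only: sum.inter_filter[OF finite_atLeastAtMost])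
qed

lemma image_exp_P2_odd:
  assumes "P \<in> monoms_in {1..3*n+1}" "i < n"
  shows "image_exp (P2_matrix n) P (2*i+1) = lookup P (ia i) + lookup P (ib i)"
proof -
  have "{k\<in>{1..3*n+1}. 2*i+1 \<in> P2_support n k} = {ia i, ib i}"
    using assms(2) unfolding P2_index_range_iff by (auto simp: P2_support_simps) presburger
  then show ?thesis using image_exp_P2[OF assms(1)] by simp
qed

lemma image_exp_P2_even:
  assumes "P \<in> monoms_in {1..3*n+1}" "i < n"
  shows "image_exp (P2_matrix n) P (2*i+2) = lookup P (ib i) + lookup P (ic i)"
proof -
  have "{k\<in>{1..3*n+1}. 2*i+2 \<in> P2_support n k} = {ib i, ic i}"
    using assms(2) unfolding P2_index_range_iff by (auto simp: P2_support_simps) presburger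
  then show ?thesis using image_exp_P2[OF assms(1)] by simp
qed

lemma sum_P2_blocks:
  "(\<Sum>k\<in>{1..3*n+1}. f k) = (\<Sum>i<n. f (ia i) + f (ib i) + f (ic i)) + f (ia n)"
proof (induction n)
  case 0
  then show ?case by (simp add: ia_def)
next
  case (Suc n)
  have "{1..3 * Suc n + 1} = insert (ia (Suc n)) (insert (ic n) (insert (ib n) {1..3*n+1}))"
    by (auto simp: ia_def ib_def ic_def)
  then have "(\<Sum>k\<in>{1..3 * Suc n + 1}. f k) = f (ia (Suc n)) + f (ic n) + f (ib n) + (\<Sum>k\<in>{1..3*n+1}. f k)"
    by (simp add: ia_def ib_def ic_def add.assoc)
  then show ?case using Suc.IH by (simp add: algebra_simps)
qed

lemma image_exp_P2_apex:
  assumes "P \<in> monoms_in {1..3*n+1}"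
  shows "image_exp (P2_matrix n) P (2*n+1)
    = (\<Sum>i<n. lookup P (ia i) + lookup P (ib i) + lookup P (ic i)) + lookup P (ia n)"
proof -
  have "2*n+1 \<in> P2_support n k" if "k \<in> {1..3*n+1}" for k
    using that unfolding P2_index_range_iff by (auto simp: P2_support_simps)
  then have "{k\<in>{1..3*n+1}. 2*n+1 \<in> P2_support n k} = {1..3*n+1}"
    by blast
  then show ?thesis using image_exp_P2[OF assms] sum_P2_blocks by simp
qed

definition P2_pairs :: "nat \<Rightarrow> (monom \<times> monom) set" where
  "P2_pairs n =
     {(X (ia i) + X (ic i), X (ib i) + X (ia n)) | i. i < n}
   \<union> {(X (ib i) + X (ia n), X (ia i) + X (ic i)) | i. i < n}
   \<union> {(X (ia i) + X (ic i) + X (ib j), X (ia j) + X (ic j) + X (ib i)) | i j. i < n \<and> j < n \<and> i \<noteq> j}"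

lemma P2_pairs_cases [consumes 1, case_names V' V'_swap V'']:
  assumes "(p, q) \<in> P2_pairs n"
  obtains (V') i where "i < n" "p = X (ia i) + X (ic i)" "q = X (ib i) + X (ia n)"
    | (V'_swap) i where "i < n" "p = X (ib i) + X (ia n)" "q = X (ia i) + X (ic i)"
    | (V'') i j where "i < n" "j < n" "i \<noteq> j"
        "p = X (ia i) + X (ic i) + X (ib j)" "q = X (ia j) + X (ic j) + X (ib i)"
  using assms unfolding P2_pairs_def by blast

lemma P2_pairs_sym: "(p, q) \<in> P2_pairs n \<Longrightarrow> (q, p) \<in> P2_pairs n"
  unfolding P2_pairs_def by blast

lemma P2_pairs_finite: "finite (P2_pairs n)"
proof -
  have fin: "finite {(X (ia i) + X (ic i) + X (ib j), X (ia j) + X (ic j) + X (ib i)) | i j. i < n \<and> j < n}"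
    by (rule finite_image_set2) simp_all
  show ?thesis
    unfolding P2_pairs_def
    by (intro finite_UnI) (simp, simp, rule rev_finite_subset[OF fin], blast)
qed

lemma P2_pair_props:
  assumes "(p, q) \<in> P2_pairs n"
  shows "p \<noteq> q" "p \<noteq> 0" "p \<in> monoms_in {1..3*n+1}" "q \<in> monoms_in {1..3*n+1}"
    "image_exp (P2_matrix n) p = image_exp (P2_matrix n) q"
proof -
  from assms have "keys p \<noteq> keys q"
    by (cases rule: P2_pairs_cases) (auto simp: keys_add_monom dest!: equalityD1)
  then show "p \<noteq> q" by blast
  from assms have "keys p \<noteq> {}"
    by (cases rule: P2_pairs_cases) (simp_all add: keys_add_monom)
  then show "p \<noteq> 0" by auto
  from assms have "keys p \<subseteq> {1..3*n+1} \<and> keys q \<subseteq> {1..3*n+1}"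
    by (cases rule: P2_pairs_cases) (auto simp: keys_add_monom ia_def ib_def ic_def)
  then show "p \<in> monoms_in {1..3*n+1}" "q \<in> monoms_in {1..3*n+1}"
    by (simp_all add: monoms_in_def)
  from assms show "image_exp (P2_matrix n) p = image_exp (P2_matrix n) q"
    by (cases rule: P2_pairs_cases)
      (auto simp: fun_eq_iff image_exp_add image_exp_single P2_matrix_def P2_support_simps)
qed

lemma P2_same_image_coords:
  assumes P: "P \<in> monoms_in {1..3*n+1}" and Q: "Q \<in> monoms_in {1..3*n+1}"
    and im: "image_exp (P2_matrix n) P = image_exp (P2_matrix n) Q"
  shows "i < n \<Longrightarrow> lookup P (ia i) + lookup P (ib i) = lookup Q (ia i) + lookup Q (ib i)"
    and "i < n \<Longrightarrow> lookup P (ib i) + lookup P (ic i) = lookup Q (ib i) + lookup Q (ic i)"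
    and "(\<Sum>i<n. lookup P (ia i) + lookup P (ib i) + lookup P (ic i)) + lookup P (ia n)
      = (\<Sum>i<n. lookup Q (ia i) + lookup Q (ib i) + lookup Q (ic i)) + lookup Q (ia n)"
  using image_exp_P2_odd[OF P] image_exp_P2_odd[OF Q] image_exp_P2_even[OF P] image_exp_P2_even[OF Q]
    image_exp_P2_apex[OF P] image_exp_P2_apex[OF Q] im by metis+

text \<open>Coordinate 2n+1 is the total degree. If no t_{3j+2} occurred more often in Q than in P, each
  block of P would have degree at most that of the same block of Q, strictly so for block i.\<close>
lemma P2_exists_ib_less:
  assumes P: "P \<in> monoms_in {1..3*n+1}" and Q: "Q \<in> monoms_in {1..3*n+1}"
    and im: "image_exp (P2_matrix n) P = image_exp (P2_matrix n) Q" and apex: "lookup P (ia n) = 0"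
    and i: "i < n" and less: "lookup Q (ib i) < lookup P (ib i)"
  shows "\<exists>j<n. lookup P (ib j) < lookup Q (ib j)"
proof (rule ccontr)
  note coords = P2_same_image_coords[OF P Q im]
  assume "\<not> ?thesis"
  then have "lookup Q (ib j) \<le> lookup P (ib j)" if "j < n" for j
    using that by (meson leI)
  then have "lookup P (ia j) + lookup P (ib j) + lookup P (ic j)
      \<le> lookup Q (ia j) + lookup Q (ib j) + lookup Q (ic j)" if "j < n" for j
    using coords(1,2)[OF that] that by fastforce
  moreover have "lookup P (ia i) + lookup P (ib i) + lookup P (ic i)
      < lookup Q (ia i) + lookup Q (ib i) + lookup Q (ic i)"
    using coords(1,2)[OF i] less by linarith
  ultimately have "(\<Sum>j<n. lookup P (ia j) + lookup P (ib j) + lookup P (ic j))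
      < (\<Sum>j<n. lookup Q (ia j) + lookup Q (ib j) + lookup Q (ic j))"
    using i by (intro sum_strict_mono_ex1) auto
  then show False using coords(3) apex by linarith
qed

lemma P2_pairs_divide_of_ib_less:
  assumes P: "P \<in> monoms_in {1..3*n+1}" and Q: "Q \<in> monoms_in {1..3*n+1}"
    and im: "image_exp (P2_matrix n) P = image_exp (P2_matrix n) Q"
    and i: "i < n" and less: "lookup Q (ib i) < lookup P (ib i)"
  shows "\<exists>(p, q)\<in>P2_pairs n. mdvd p P \<and> mdvd q Q"
proof -
  note coords = P2_same_image_coords[OF P Q im]
  have Q_ac: "1 \<le> lookup Q (ia i)" "1 \<le> lookup Q (ic i)"
    using coords(1,2)[OF i] less by linarith+
  show ?thesis
  proof (cases "1 \<le> lookup P (ia n)")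
    case True
    then have "mdvd (X (ib i) + X (ia n)) P"
      using less i by (intro mdvd_X2I) auto
    moreover have "mdvd (X (ia i) + X (ic i)) Q"
      using Q_ac by (intro mdvd_X2I) auto
    moreover have "(X (ib i) + X (ia n), X (ia i) + X (ic i)) \<in> P2_pairs n"
      using i unfolding P2_pairs_def by blast
    ultimately show ?thesis by blast
  next
    case False
    then obtain j where j: "j < n" "lookup P (ib j) < lookup Q (ib j)"
      using P2_exists_ib_less[OF P Q im _ i less] by auto
    have "mdvd (X (ia j) + X (ic j) + X (ib i)) P"
      using coords(1,2)[OF j(1)] j less by (intro mdvd_X3I) auto
    moreover have "mdvd (X (ia i) + X (ic i) + X (ib j)) Q"
      using j less Q_ac by (intro mdvd_X3I) auto
    moreover have "(X (ia j) + X (ic j) + X (ib i), X (ia i) + X (ic i) + X (ib j)) \<in> P2_pairs n"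
      using i j less unfolding P2_pairs_def by fastforce
    ultimately show ?thesis by blast
  qed
qed

lemma P2_pairs_divide:
  assumes P: "P \<in> monoms_in {1..3*n+1}" and Q: "Q \<in> monoms_in {1..3*n+1}"
    and im: "image_exp (P2_matrix n) P = image_exp (P2_matrix n) Q" and "P \<noteq> Q"
  shows "\<exists>(p, q)\<in>P2_pairs n. mdvd p P \<and> mdvd q Q"
proof (cases "\<exists>i<n. lookup P (ib i) \<noteq> lookup Q (ib i)")
  case True
  then obtain i where i: "i < n" "lookup P (ib i) \<noteq> lookup Q (ib i)" by blast
  show ?thesis
  proof (cases "lookup Q (ib i) < lookup P (ib i)")
    case True
    then show ?thesis using P2_pairs_divide_of_ib_less[OF P Q im i(1)] by blast
  next
    case False
    then have "lookup P (ib i) < lookup Q (ib i)" using i(2) by linarith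
    then obtain p q where "(p, q) \<in> P2_pairs n" "mdvd p Q" "mdvd q P"
      using P2_pairs_divide_of_ib_less[OF Q P im[symmetric] i(1)] by blast
    then show ?thesis using P2_pairs_sym by blast
  qed
next
  case False
  note coords = P2_same_image_coords[OF P Q im]
  have "lookup P k = lookup Q k" if "k \<in> {1..3*n+1}" for k
  proof -
    have "lookup P (ia i) = lookup Q (ia i) \<and> lookup P (ib i) = lookup Q (ib i)
        \<and> lookup P (ic i) = lookup Q (ic i)" if "i < n" for i
      using False coords(1,2)[OF that] that by auto
    moreover from this have "lookup P (ia n) = lookup Q (ia n)"
      using coords(3) by simp
    ultimately show ?thesis
      using that unfolding P2_index_range_iff by auto
  qed
  moreover have "lookup P k = lookup Q k" if "k \<notin> {1..3*n+1}" for k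
  proof -
    have "k \<notin> keys P" "k \<notin> keys Q"
      using P Q that unfolding monoms_in_def by blast+
    then show ?thesis by (simp add: in_keys_iff)
  qed
  ultimately have "P = Q" by (metis poly_mapping_eqI)
  with \<open>P \<noteq> Q\<close> show ?thesis by blast
qed

lemma P2_pair_system: "toric_pair_system {1..3*n+1} (P2_matrix n) (P2_pairs n)"
  by unfold_locales (metis P2_pair_props P2_pairs_divide)+

definition P2_lex :: "nat \<Rightarrow> monom \<Rightarrow> monom \<Rightarrow> bool" where
  "P2_lex n = lex_ord (ia n # [1..<ia n])"

lemma P2_lex_monomial_order: "monomial_order {1..3*n+1} (P2_lex n)"
  unfolding P2_lex_def by (rule lex_ord_monomial_order) (auto simp: ia_def)

lemma P2_lex_V'_head:
  "i < n \<Longrightarrow> \<not> P2_lex n (X (ib i) + X (ia n)) (X (ia i) + X (ic i))"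
  by (simp add: P2_lex_def lex_ord_def lookup_add lookup_single)

lemma P2_head_dvd_side:
  assumes "(p', q') \<in> P2_pairs n" "P2_lex n q' p'" "(p, q) \<in> P2_pairs n"
    and "m = p \<or> m = q" "mdvd p' m"
  shows "(p', q') = (p, q) \<or> (p', q') = (q, p)"
  using assms(1,3,4) P2_lex_V'_head[of _ n] assms(2) mdvd_imp_keys_subset[OF assms(5)]
  by (elim P2_pairs_cases) (auto simp: keys_add_monom)

lemma P2_oriented_binoms_reduced_gb:
  "reduced_groebner_basis (P2_lex n) (toric_ideal {1..3*n+1} (P2_matrix n))
     (toric_pair_system.oriented_binoms (P2_pairs n) (P2_lex n))"
proof (rule toric_pair_system.oriented_binoms_reduced_gb[OF P2_pair_system P2_lex_monomial_order
      P2_pairs_finite])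
  interpret monomial_ord "{1..3*n+1}" "P2_lex n"
    by (rule monomial_ord.intro[OF P2_lex_monomial_order])
  fix p q p' q' m
  assume pq: "(p, q) \<in> P2_pairs n" "P2_lex n q p" and pq': "(p', q') \<in> P2_pairs n" "P2_lex n q' p'"
    and m: "m \<in> {p, q}" and dvd: "mdvd p' m"
  have "(p', q') = (p, q) \<or> (p', q') = (q, p)"
    using P2_head_dvd_side pq' pq dvd m by blast
  moreover have "(p', q') \<noteq> (q, p)"
    using pq pq'(2) P2_pair_props(1,3,4)[OF pq(1)] ord_antisym by blast
  ultimately show "(p', q') = (p, q)" by blast
qed

lemma var_mult: "var a * var b = Poly_Mapping.single (X a + X b) 1"
  by (simp add: var_def mult_single)

lemma monomial_mult_var: "Poly_Mapping.single m 1 * var c = Poly_Mapping.single (m + X c) 1"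
  by (simp add: var_def mult_single)

definition V_pairs :: "nat \<Rightarrow> (monom \<times> monom) set" where
  "V_pairs n = {(X (ia i) + X (ic i), X (ib i) + X (ia n)) | i. i < n}
    \<union> {(X (ia i) + X (ic i) + X (ib j), X (ia j) + X (ic j) + X (ib i)) | i j. i < j \<and> j < n}"

lemma V_set_eq: "V'_set n \<union> V''_set n = (\<lambda>(p, q). binom p q) ` V_pairs n"
proof -
  have "i < j \<and> j \<le> n - 1 \<longleftrightarrow> i < j \<and> j < n" for i j :: nat by linarith
  then show ?thesis
    unfolding V'_set_def V''_set_def V_pairs_def var_mult monomial_mult_var binom_def
      ia_def ib_def ic_def
    by auto
qed

lemma P2_pairs_eq: "P2_pairs n = V_pairs n \<union> prod.swap ` V_pairs n"
proof -
  have "(p, q) \<in> P2_pairs n \<longleftrightarrow> (p, q) \<in> V_pairs n \<or> (q, p) \<in> V_pairs n" for p q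
  proof
    assume "(p, q) \<in> P2_pairs n"
    then show "(p, q) \<in> V_pairs n \<or> (q, p) \<in> V_pairs n"
    proof (cases rule: P2_pairs_cases)
      case (V'' i j)
      then show ?thesis
        unfolding V_pairs_def by (cases "i < j") (blast, use nat_neq_iff in blast)
    qed (auto simp: V_pairs_def)
  next
    assume "(p, q) \<in> V_pairs n \<or> (q, p) \<in> V_pairs n"
    then show "(p, q) \<in> P2_pairs n"
      unfolding V_pairs_def P2_pairs_def by fastforce
  qed
  then show ?thesis by (auto simp: image_iff) (metis swap_simp)
qed

lemma pm_closure_V_eq:
  "pm_closure (V'_set n \<union> V''_set n) = (\<lambda>(p, q). binom p q) ` P2_pairs n"
proof -
  have "(\<lambda>(p, q). binom p q) \<circ> prod.swap = uminus \<circ> (\<lambda>(p, q). binom p q)"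
    by (auto simp: uminus_binom)
  then show ?thesis
    unfolding pm_closure_def V_set_eq P2_pairs_eq by (simp add: image_Un image_comp)
qed

theorem mainTheorem7:
  fixes n :: nat
  assumes "n \<ge> 1"
  shows "pm_closure (universal_groebner_basis {1..3*n+1}
            (toric_ideal {1..3*n+1} (P2_matrix n)))
         = pm_closure (V'_set n \<union> V''_set n)"
proof -
  have "pm_closure (universal_groebner_basis {1..3*n+1} (toric_ideal {1..3*n+1} (P2_matrix n)))
      = (\<lambda>(p, q). binom p q) ` P2_pairs n"
    by (rule toric_pair_system.pm_closure_universal_gb_eq[OF P2_pair_system P2_pairs_sym
          P2_lex_monomial_order P2_oriented_binoms_reduced_gb])
  then show ?thesis
    using pm_closure_V_eq by simp
qed

end
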